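(* Let $S$ be a semiring, let $f:L\to M$ and $g:L\to N$ be morphisms of left $S$-semimodules, and let $(g',f';P)$ be a pushout of $(f,g)$, with $g':M\to P$, $f':N\to P$, $g'\circ f=f'\circ g$. Then: (1) if $f$ is surjective, then $f'$ is surjective; (2) if $f$ is $i$-normal (i.e. $f(L)\subseteq M$ is subtractive), then $f'$ is $i$-normal (i.e. $f'(N)\subseteq P$ is subtractive); (3) if $f$ is a normal epimorphism, then $f'$ is a normal epimorphism; (4) if $f$ is injective and $g$ is a normal epimorphism, then $f'$ is injective.
   Context: A semiring $(S,+,0,\cdot,1)$ consists of a commutative monoid $(S,+,0)$ and a monoid $(S,\cdot,1)$ with $0\neq 1$, absorbing zero and both distributive laws; left $S$-semimodules and $S$-linear maps are as for modules over rings (without subtraction). For an $S$-linear map $h:X\to Y$, $\mathrm{Ker}(h)=\{x\in X\mid h(x)=0\}$. $h$ is $k$-normal if $h(x)=h(x')$ implies $x+k=x'+k'$ for some $k,k'\in\mathrm{Ker}(h)$; $h$ is $i$-normal if $h(X)=\overline{h(X)}$, where for $A\subseteq Y$ the subtractive closure is $\overline{A}=\{y\in Y\mid y+a=a'\text{ for some }a,a'\in A\}$ (a subsemimodule $A$ is subtractive if $A=\overline A$). A normal epimorphism is a surjective $k$-normal $S$-linear map. A pushout of $(f,g)$ is a triple $(g',f';P)$ with $S$-linear $g':M\to P$, $f':N\to P$, $g'\circ f=f'\circ g$, such that for every $Q$ and $S$-linear $g^*:M\to Q$, $f^*:N\to Q$ with $g^*\circ f=f^*\circ g$ there is a unique $S$-linear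 $\varphi:P\to Q$ with $\varphi\circ g'=g^*$, $\varphi\circ f'=f^*$. *)

theory Defs
  imports Main
begin

record ('s, 'a) smod =
  scar :: "'a set"
  sadd :: "'a \<Rightarrow> 'a \<Rightarrow> 'a"
  szero :: "'a"
  ssmul :: "'s \<Rightarrow> 'a \<Rightarrow> 'a"

definition semimodule :: "('s::semiring_1, 'a, 'b) smod_scheme \<Rightarrow> bool" where
  "semimodule X \<longleftrightarrow>
     szero X \<in> scar X \<and>
     (\<forall>x\<in>scar X. \<forall>y\<in>scar X. sadd X x y \<in> scar X) \<and>
     (\<forall>r. \<forall>x\<in>scar X. ssmul X r x \<in> scar X) \<and>
     (\<forall>x\<in>scar X. \<forall>y\<in>scar X. \<forall>z\<in>scar X. sadd X (sadd X x y) z = sadd X x (sadd X y z)) \<and>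
     (\<forall>x\<in>scar X. \<forall>y\<in>scar X. sadd X x y = sadd X y x) \<and>
     (\<forall>x\<in>scar X. sadd X (szero X) x = x) \<and>
     (\<forall>r s. \<forall>x\<in>scar X. ssmul X (r * s) x = ssmul X r (ssmul X s x)) \<and>
     (\<forall>r s. \<forall>x\<in>scar X. ssmul X (r + s) x = sadd X (ssmul X r x) (ssmul X s x)) \<and>
     (\<forall>r. \<forall>x\<in>scar X. \<forall>y\<in>scar X. ssmul X r (sadd X x y) = sadd X (ssmul X r x) (ssmul X r y)) \<and>
     (\<forall>x\<in>scar X. ssmul X 1 x = x) \<and>
     (\<forall>x\<in>scar X. ssmul X 0 x = szero X) \<and>
     (\<forall>r. ssmul X r (szero X) = szero X)"

definition linear_map ::
  "('s::semiring_1, 'a, 'c) smod_scheme \<Rightarrow> ('s, 'b, 'd) smod_scheme \<Rightarrow> ('a \<Rightarrow> 'b) \<Rightarrow> bool" where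
  "linear_map X Y h \<longleftrightarrow>
     (\<forall>x\<in>scar X. h x \<in> scar Y) \<and>
     (\<forall>x\<in>scar X. \<forall>y\<in>scar X. h (sadd X x y) = sadd Y (h x) (h y)) \<and>
     h (szero X) = szero Y \<and>
     (\<forall>r. \<forall>x\<in>scar X. h (ssmul X r x) = ssmul Y r (h x))"

definition Ker :: "('s, 'a, 'c) smod_scheme \<Rightarrow> ('s, 'b, 'd) smod_scheme \<Rightarrow> ('a \<Rightarrow> 'b) \<Rightarrow> 'a set" where
  "Ker X Y h = {x \<in> scar X. h x = szero Y}"

definition k_normal :: "('s, 'a, 'c) smod_scheme \<Rightarrow> ('s, 'b, 'd) smod_scheme \<Rightarrow> ('a \<Rightarrow> 'b) \<Rightarrow> bool" where
  "k_normal X Y h \<longleftrightarrow>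
     (\<forall>x\<in>scar X. \<forall>x'\<in>scar X. h x = h x' \<longrightarrow>
        (\<exists>k\<in>Ker X Y h. \<exists>k'\<in>Ker X Y h. sadd X x k = sadd X x' k'))"

definition sub_closure :: "('s, 'b, 'd) smod_scheme \<Rightarrow> 'b set \<Rightarrow> 'b set" where
  "sub_closure Y A = {y \<in> scar Y. \<exists>a\<in>A. \<exists>a'\<in>A. sadd Y y a = a'}"

definition i_normal :: "('s, 'a, 'c) smod_scheme \<Rightarrow> ('s, 'b, 'd) smod_scheme \<Rightarrow> ('a \<Rightarrow> 'b) \<Rightarrow> bool" where
  "i_normal X Y h \<longleftrightarrow> h ` scar X = sub_closure Y (h ` scar X)"

definition surjective_map :: "('s, 'a, 'c) smod_scheme \<Rightarrow> ('s, 'b, 'd) smod_scheme \<Rightarrow> ('a \<Rightarrow> 'b) \<Rightarrow> bool" where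
  "surjective_map X Y h \<longleftrightarrow> h ` scar X = scar Y"

definition normal_epi :: "('s, 'a, 'c) smod_scheme \<Rightarrow> ('s, 'b, 'd) smod_scheme \<Rightarrow> ('a \<Rightarrow> 'b) \<Rightarrow> bool" where
  "normal_epi X Y h \<longleftrightarrow> surjective_map X Y h \<and> k_normal X Y h"

text \<open>Pushout of (f,g), where f : L \<rightarrow> M and g : L \<rightarrow> N, with respect to all test
  semimodules Q whose carrier lies in the type 'q (selected by the TYPE argument).\<close>
definition is_pushout_wrt ::
  "'q itself \<Rightarrow> ('s::semiring_1, 'l) smod \<Rightarrow> ('s, 'm) smod \<Rightarrow> ('s, 'n) smod \<Rightarrow>
   ('l \<Rightarrow> 'm) \<Rightarrow> ('l \<Rightarrow> 'n) \<Rightarrow> ('s, 'p) smod \<Rightarrow> ('m \<Rightarrow> 'p) \<Rightarrow> ('n \<Rightarrow> 'p) \<Rightarrow> bool" where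
  "is_pushout_wrt _ L M N f g P g' f' \<longleftrightarrow>
     linear_map M P g' \<and> linear_map N P f' \<and>
     (\<forall>x\<in>scar L. g' (f x) = f' (g x)) \<and>
     (\<forall>(Q :: ('s, 'q) smod) gs fs.
        semimodule Q \<and> linear_map M Q gs \<and> linear_map N Q fs \<and>
        (\<forall>x\<in>scar L. gs (f x) = fs (g x)) \<longrightarrow>
        (\<exists>\<phi>. linear_map P Q \<phi> \<and> (\<forall>x\<in>scar M. \<phi> (g' x) = gs x) \<and> (\<forall>y\<in>scar N. \<phi> (f' y) = fs y)) \<and>
        (\<forall>\<phi> \<psi>. linear_map P Q \<phi> \<and> (\<forall>x\<in>scar M. \<phi> (g' x) = gs x) \<and> (\<forall>y\<in>scar N. \<phi> (f' y) = fs y) \<and>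
                linear_map P Q \<psi> \<and> (\<forall>x\<in>scar M. \<psi> (g' x) = gs x) \<and> (\<forall>y\<in>scar N. \<psi> (f' y) = fs y)
                \<longrightarrow> (\<forall>z\<in>scar P. \<phi> z = \<psi> z)))"

end

theory Submission
  imports Defs
begin

text \<open>Every element of the pushout P has the form g'(m) + f'(n): such sums form a subsemimodule
  through which both legs factor, and uniqueness in the universal property forces it to be all of P.
  This gives (1) at once. For (2), map P to the quotient M/f(L), sending N to zero: the M-component
  of an element of the subtractive closure of f'(N) then lies in the subtractive closure of f(L).
  For (3), if f is a normal epimorphism then g descends to a map M \<rightarrow> N/g(Ker f), so P maps to
  N/g(Ker f) compatibly with the projection; hence f'(n1) = f'(n2) forces n1 and n2 to be congruent
  modulo g(Ker f) \<subseteq> Ker f'. With f and g exchanged, this congruence combined with injectivity of f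
  gives (4). The universal property only quantifies over test semimodules of one fixed type, so all
  these targets are first transported along injections into that type.\<close>

context
  fixes X :: "('s::semiring_1, 'a, 'c) smod_scheme"
  assumes X: "semimodule X"
begin

lemma smod_zero_closed: "szero X \<in> scar X"
  using X unfolding semimodule_def by metis

lemma smod_add_closed: "x \<in> scar X \<Longrightarrow> y \<in> scar X \<Longrightarrow> sadd X x y \<in> scar X"
  using X unfolding semimodule_def by metis

lemma smod_smul_closed: "x \<in> scar X \<Longrightarrow> ssmul X r x \<in> scar X"
  using X unfolding semimodule_def by metis

lemma smod_add_assoc:
  "x \<in> scar X \<Longrightarrow> y \<in> scar X \<Longrightarrow> z \<in> scar X \<Longrightarrow> sadd X (sadd X x y) z = sadd X x (sadd X y z)"
  using X unfolding semimodule_def by metis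

lemma smod_add_commute: "x \<in> scar X \<Longrightarrow> y \<in> scar X \<Longrightarrow> sadd X x y = sadd X y x"
  using X unfolding semimodule_def by metis

lemma smod_add_zero_left: "x \<in> scar X \<Longrightarrow> sadd X (szero X) x = x"
  using X unfolding semimodule_def by metis

lemma smod_add_zero_right: "x \<in> scar X \<Longrightarrow> sadd X x (szero X) = x"
  by (metis smod_add_commute smod_add_zero_left smod_zero_closed)

lemma smod_add_left_commute:
  "x \<in> scar X \<Longrightarrow> y \<in> scar X \<Longrightarrow> z \<in> scar X \<Longrightarrow> sadd X x (sadd X y z) = sadd X y (sadd X x z)"
  by (metis smod_add_assoc smod_add_commute)

lemma smod_add_swap:
  assumes "a \<in> scar X" "b \<in> scar X" "c \<in> scar X" "d \<in> scar X"
  shows "sadd X (sadd X a b) (sadd X c d) = sadd X (sadd X a c) (sadd X b d)"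
  using assms by (simp add: smod_add_assoc smod_add_closed smod_add_left_commute[of b c d])

lemma smod_smul_mult: "x \<in> scar X \<Longrightarrow> ssmul X (r * s) x = ssmul X r (ssmul X s x)"
  using X unfolding semimodule_def by metis

lemma smod_add_smul: "x \<in> scar X \<Longrightarrow> ssmul X (r + s) x = sadd X (ssmul X r x) (ssmul X s x)"
  using X unfolding semimodule_def by metis

lemma smod_smul_add:
  "x \<in> scar X \<Longrightarrow> y \<in> scar X \<Longrightarrow> ssmul X r (sadd X x y) = sadd X (ssmul X r x) (ssmul X r y)"
  using X unfolding semimodule_def by metis

lemma smod_smul_one: "x \<in> scar X \<Longrightarrow> ssmul X 1 x = x"
  using X unfolding semimodule_def by metis

lemma smod_zero_smul: "x \<in> scar X \<Longrightarrow> ssmul X 0 x = szero X"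
  using X unfolding semimodule_def by metis

lemma smod_smul_zero: "ssmul X r (szero X) = szero X"
  using X unfolding semimodule_def by metis

end

context
  fixes X :: "('s::semiring_1, 'a, 'c) smod_scheme" and Y :: "('s, 'b, 'd) smod_scheme"
    and h :: "'a \<Rightarrow> 'b"
  assumes h: "linear_map X Y h"
begin

lemma linear_map_closed: "x \<in> scar X \<Longrightarrow> h x \<in> scar Y"
  using h unfolding linear_map_def by metis

lemma linear_map_add: "x \<in> scar X \<Longrightarrow> y \<in> scar X \<Longrightarrow> h (sadd X x y) = sadd Y (h x) (h y)"
  using h unfolding linear_map_def by metis

lemma linear_map_zero: "h (szero X) = szero Y"
  using h unfolding linear_map_def by metis

lemma linear_map_smul: "x \<in> scar X \<Longrightarrow> h (ssmul X r x) = ssmul Y r (h x)"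
  using h unfolding linear_map_def by metis

end

lemma linear_map_comp: "linear_map X Y h \<Longrightarrow> linear_map Y Z k \<Longrightarrow> linear_map X Z (\<lambda>x. k (h x))"
  by (simp add: linear_map_def)

lemma linear_map_const_zero: "semimodule Y \<Longrightarrow> linear_map X Y (\<lambda>_. szero Y)"
  by (simp add: linear_map_def smod_zero_closed smod_add_zero_left smod_smul_zero)

lemma linear_map_restrict_codomain:
  "linear_map X Y h \<Longrightarrow> h ` scar X \<subseteq> S \<Longrightarrow> linear_map X (Y\<lparr>scar := S\<rparr>) h"
  by (auto simp: linear_map_def)

lemma linear_map_widen_codomain:
  "linear_map X (Y\<lparr>scar := S\<rparr>) h \<Longrightarrow> S \<subseteq> scar Y \<Longrightarrow> linear_map X Y h"
  by (auto simp: linear_map_def)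

lemma semimodule_surjective_image:
  assumes X: "semimodule X" and h: "linear_map X Y h" and surj: "h ` scar X = scar Y"
  shows "semimodule Y"
proof -
  note hc = linear_map_closed[OF h] and ha = linear_map_add[OF h, symmetric]
    and hs = linear_map_smul[OF h, symmetric]
  have h0: "szero Y = h (szero X)" using linear_map_zero[OF h] by simp
  have ex: "\<And>y. y \<in> scar Y \<Longrightarrow> \<exists>x\<in>scar X. y = h x" using surj by auto
  note cl = smod_zero_closed[OF X] smod_add_closed[OF X] smod_smul_closed[OF X]
  note eqs = smod_add_zero_left[OF X] smod_smul_mult[OF X] smod_add_smul[OF X]
    smod_smul_add[OF X] smod_smul_one[OF X] smod_zero_smul[OF X] smod_smul_zero[OF X]
  show ?thesis
    unfolding semimodule_def
    by (intro conjI ballI allI; (elim ex[elim_format] bexE)?; simp add: h0 hc ha hs cl eqs;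
        metis ha smod_add_assoc[OF X] smod_add_commute[OF X] cl)
qed

definition subsemimodule :: "('s::semiring_1, 'a, 'c) smod_scheme \<Rightarrow> 'a set \<Rightarrow> bool" where
  "subsemimodule X K \<longleftrightarrow> K \<subseteq> scar X \<and> szero X \<in> K \<and> (\<forall>a\<in>K. \<forall>b\<in>K. sadd X a b \<in> K) \<and>
     (\<forall>r. \<forall>a\<in>K. ssmul X r a \<in> K)"

lemma subsemimodule_carrier: "semimodule X \<Longrightarrow> subsemimodule X (scar X)"
  by (simp add: subsemimodule_def smod_zero_closed smod_add_closed smod_smul_closed)

lemma subsemimodule_image:
  assumes K: "subsemimodule X K" and h: "linear_map X Y h"
  shows "subsemimodule Y (h ` K)"
proof -
  have KX: "K \<subseteq> scar X" and K0: "szero X \<in> K"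
    and Kadd: "\<And>a b. a \<in> K \<Longrightarrow> b \<in> K \<Longrightarrow> sadd X a b \<in> K"
    and Ksmul: "\<And>r a. a \<in> K \<Longrightarrow> ssmul X r a \<in> K"
    using K by (auto simp: subsemimodule_def)
  show ?thesis
    unfolding subsemimodule_def
  proof (intro conjI ballI allI)
    show "h ` K \<subseteq> scar Y" using KX linear_map_closed[OF h] by auto
    show "szero Y \<in> h ` K" using K0 linear_map_zero[OF h] by force
  next
    fix a b assume "a \<in> h ` K" "b \<in> h ` K"
    then obtain x y where "x \<in> K" "y \<in> K" "a = h x" "b = h y" by auto
    then have "sadd Y a b = h (sadd X x y)" using KX linear_map_add[OF h, of x y] by (auto simp: subset_iff)
    then show "sadd Y a b \<in> h ` K" using Kadd[OF \<open>x \<in> K\<close> \<open>y \<in> K\<close>] by (rule image_eqI)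
  next
    fix r a assume "a \<in> h ` K"
    then obtain x where "x \<in> K" "a = h x" by auto
    then have "ssmul Y r a = h (ssmul X r x)" using KX linear_map_smul[OF h, of x r] by (auto simp: subset_iff)
    then show "ssmul Y r a \<in> h ` K" using Ksmul[OF \<open>x \<in> K\<close>] by (rule image_eqI)
  qed
qed

lemma subsemimodule_Ker:
  assumes X: "semimodule X" and Y: "semimodule Y" and h: "linear_map X Y h"
  shows "subsemimodule X (Ker X Y h)"
  unfolding subsemimodule_def Ker_def
  using linear_map_add[OF h] linear_map_zero[OF h] linear_map_smul[OF h]
    smod_add_zero_left[OF Y smod_zero_closed[OF Y]] smod_smul_zero[OF Y]
    smod_zero_closed[OF X] smod_add_closed[OF X] smod_smul_closed[OF X]
  by auto

lemma semimodule_restrict: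
  assumes X: "semimodule X" and K: "subsemimodule X K"
  shows "semimodule (X\<lparr>scar := K\<rparr>)"
proof -
  have KX: "K \<subseteq> scar X" using K by (simp add: subsemimodule_def)
  show ?thesis
    unfolding semimodule_def using K
    by (simp add: subsemimodule_def)
      (meson KX subsetD smod_add_assoc[OF X] smod_add_commute[OF X] smod_add_zero_left[OF X]
        smod_smul_mult[OF X] smod_add_smul[OF X] smod_smul_add[OF X] smod_smul_one[OF X]
        smod_zero_smul[OF X] smod_smul_zero[OF X])
qed

lemma sub_closure_superset:
  assumes "semimodule Y" "A \<subseteq> scar Y" "szero Y \<in> A"
  shows "A \<subseteq> sub_closure Y A"
  using assms by (force simp: sub_closure_def smod_add_zero_right)

text \<open>The quotient operations act on SOME-chosen representatives of the classes; since the Bourne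
  relation is a congruence, the choice does not matter.\<close>

definition bourne_rel :: "('s::semiring_1, 'a, 'c) smod_scheme \<Rightarrow> 'a set \<Rightarrow> 'a \<Rightarrow> 'a \<Rightarrow> bool" where
  "bourne_rel X K x y \<longleftrightarrow> x \<in> scar X \<and> y \<in> scar X \<and> (\<exists>a\<in>K. \<exists>b\<in>K. sadd X x a = sadd X y b)"

definition bourne_class :: "('s::semiring_1, 'a, 'c) smod_scheme \<Rightarrow> 'a set \<Rightarrow> 'a \<Rightarrow> 'a set" where
  "bourne_class X K x = {y. bourne_rel X K x y}"

definition bourne_quotient :: "('s::semiring_1, 'a, 'c) smod_scheme \<Rightarrow> 'a set \<Rightarrow> ('s, 'a set) smod" where
  "bourne_quotient X K = \<lparr>scar = bourne_class X K ` scar X,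
     sadd = (\<lambda>A B. bourne_class X K (sadd X (SOME a. a \<in> A) (SOME b. b \<in> B))),
     szero = bourne_class X K (szero X),
     ssmul = (\<lambda>r A. bourne_class X K (ssmul X r (SOME a. a \<in> A)))\<rparr>"

context
  fixes X :: "('s::semiring_1, 'a, 'c) smod_scheme" and K :: "'a set"
  assumes X: "semimodule X" and K: "subsemimodule X K"
begin

lemma subsemimodule_subset: "a \<in> K \<Longrightarrow> a \<in> scar X"
  using K by (auto simp: subsemimodule_def)

lemma subsemimodule_zero: "szero X \<in> K"
  using K by (auto simp: subsemimodule_def)

lemma subsemimodule_add: "a \<in> K \<Longrightarrow> b \<in> K \<Longrightarrow> sadd X a b \<in> K"
  using K by (auto simp: subsemimodule_def)

lemma subsemimodule_smul: "a \<in> K \<Longrightarrow> ssmul X r a \<in> K"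
  using K by (auto simp: subsemimodule_def)

lemma bourne_rel_refl: "x \<in> scar X \<Longrightarrow> bourne_rel X K x x"
  unfolding bourne_rel_def using subsemimodule_zero by blast

lemma bourne_rel_sym: "bourne_rel X K x y \<Longrightarrow> bourne_rel X K y x"
  unfolding bourne_rel_def by metis

lemma bourne_rel_trans:
  assumes "bourne_rel X K x y" "bourne_rel X K y z"
  shows "bourne_rel X K x z"
proof -
  obtain a b c d where K4: "a \<in> K" "b \<in> K" "c \<in> K" "d \<in> K"
    and xy: "sadd X x a = sadd X y b" and yz: "sadd X y c = sadd X z d"
    and xyz: "x \<in> scar X" "y \<in> scar X" "z \<in> scar X"
    using assms unfolding bourne_rel_def by blast
  have abcd: "a \<in> scar X" "b \<in> scar X" "c \<in> scar X" "d \<in> scar X"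
    using K4 subsemimodule_subset by auto
  have "sadd X x (sadd X a c) = sadd X (sadd X x a) c"
    using abcd xyz by (simp add: smod_add_assoc[OF X])
  also have "\<dots> = sadd X (sadd X y c) b"
    unfolding xy using abcd xyz by (metis smod_add_assoc[OF X] smod_add_commute[OF X])
  also have "\<dots> = sadd X z (sadd X d b)"
    unfolding yz using abcd xyz by (simp add: smod_add_assoc[OF X])
  finally show ?thesis
    unfolding bourne_rel_def using xyz K4 subsemimodule_add by blast
qed

lemma bourne_rel_add:
  assumes "bourne_rel X K x y" "bourne_rel X K x' y'"
  shows "bourne_rel X K (sadd X x x') (sadd X y y')"
proof -
  obtain a b c d where K4: "a \<in> K" "b \<in> K" "c \<in> K" "d \<in> K"
    and xy: "sadd X x a = sadd X y b" and xy': "sadd X x' c = sadd X y' d"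
    and xyz: "x \<in> scar X" "y \<in> scar X" "x' \<in> scar X" "y' \<in> scar X"
    using assms unfolding bourne_rel_def by blast
  have abcd: "a \<in> scar X" "b \<in> scar X" "c \<in> scar X" "d \<in> scar X"
    using K4 subsemimodule_subset by auto
  have "sadd X (sadd X x x') (sadd X a c) = sadd X (sadd X x a) (sadd X x' c)"
    using abcd xyz by (simp add: smod_add_swap[OF X])
  also have "\<dots> = sadd X (sadd X y y') (sadd X b d)"
    unfolding xy xy' using abcd xyz by (simp add: smod_add_swap[OF X])
  finally show ?thesis
    unfolding bourne_rel_def using xyz K4 subsemimodule_add smod_add_closed[OF X] by blast
qed

lemma bourne_rel_smul:
  assumes "bourne_rel X K x y"
  shows "bourne_rel X K (ssmul X r x) (ssmul X r y)"
proof -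
  obtain a b where ab: "a \<in> K" "b \<in> K" and xy: "sadd X x a = sadd X y b"
    and xyz: "x \<in> scar X" "y \<in> scar X"
    using assms unfolding bourne_rel_def by blast
  have "sadd X (ssmul X r x) (ssmul X r a) = sadd X (ssmul X r y) (ssmul X r b)"
    using xy xyz ab subsemimodule_subset by (metis smod_smul_add[OF X])
  then show ?thesis
    unfolding bourne_rel_def using xyz ab subsemimodule_smul smod_smul_closed[OF X] by blast
qed

lemma bourne_class_eq_iff:
  assumes "x \<in> scar X"
  shows "bourne_class X K x = bourne_class X K y \<longleftrightarrow> bourne_rel X K x y"
  using assms bourne_rel_refl bourne_rel_sym bourne_rel_trans
  unfolding bourne_class_def by blast

lemma bourne_rel_some_class: "x \<in> scar X \<Longrightarrow> bourne_rel X K x (SOME a. a \<in> bourne_class X K x)"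
  using someI[of "\<lambda>a. a \<in> bourne_class X K x" x] bourne_rel_refl
  by (simp add: bourne_class_def)

lemma bourne_class_linear: "linear_map X (bourne_quotient X K) (bourne_class X K)"
  unfolding linear_map_def
proof (intro conjI ballI allI)
  fix x y assume x: "x \<in> scar X" and y: "y \<in> scar X"
  show "bourne_class X K (sadd X x y) = sadd (bourne_quotient X K) (bourne_class X K x) (bourne_class X K y)"
    using bourne_rel_add[OF bourne_rel_some_class[OF x] bourne_rel_some_class[OF y]]
      bourne_class_eq_iff smod_add_closed[OF X x y]
    by (simp add: bourne_quotient_def)
next
  fix r x assume x: "x \<in> scar X"
  show "bourne_class X K (ssmul X r x) = ssmul (bourne_quotient X K) r (bourne_class X K x)"
    using bourne_rel_smul[OF bourne_rel_some_class[OF x]] bourne_class_eq_iff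
      smod_smul_closed[OF X x]
    by (simp add: bourne_quotient_def)
qed (simp_all add: bourne_quotient_def)

lemma semimodule_bourne_quotient: "semimodule (bourne_quotient X K)"
  by (rule semimodule_surjective_image[OF X bourne_class_linear]) (simp add: bourne_quotient_def)

lemma bourne_rel_zero_imp_sub_closure:
  assumes "bourne_rel X K x (szero X)"
  shows "x \<in> sub_closure X K"
proof -
  obtain a b where "a \<in> K" "b \<in> K" "sadd X x a = sadd X (szero X) b" "x \<in> scar X"
    using assms unfolding bourne_rel_def by blast
  then show ?thesis
    unfolding sub_closure_def using smod_add_zero_left[OF X subsemimodule_subset] by auto
qed

lemma bourne_class_subsemimodule:
  assumes a: "a \<in> K"
  shows "bourne_class X K a = szero (bourne_quotient X K)"
proof -
  have "sadd X a (szero X) = sadd X (szero X) a"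
    using subsemimodule_subset[OF a] smod_add_commute[OF X] smod_zero_closed[OF X] by blast
  then have "bourne_rel X K a (szero X)"
    unfolding bourne_rel_def
    using a subsemimodule_zero subsemimodule_subset smod_zero_closed[OF X] by blast
  then show ?thesis
    using bourne_class_eq_iff subsemimodule_subset[OF a] by (simp add: bourne_quotient_def)
qed

end

definition transport_smod :: "('b \<Rightarrow> 'q) \<Rightarrow> ('s::semiring_1, 'b, 'c) smod_scheme \<Rightarrow> ('s, 'q) smod" where
  "transport_smod e R = \<lparr>scar = e ` scar R, sadd = (\<lambda>a b. e (sadd R (inv e a) (inv e b))),
     szero = e (szero R), ssmul = (\<lambda>r a. e (ssmul R r (inv e a)))\<rparr>"

lemma transport_smod_linear: "inj e \<Longrightarrow> linear_map R (transport_smod e R) e"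
  by (simp add: linear_map_def transport_smod_def)

lemma semimodule_transport_smod: "inj e \<Longrightarrow> semimodule R \<Longrightarrow> semimodule (transport_smod e R)"
  by (rule semimodule_surjective_image[OF _ transport_smod_linear]) (simp_all add: transport_smod_def)

lemma linear_map_from_transport_smod:
  "inj e \<Longrightarrow> linear_map X (transport_smod e R) \<psi> \<Longrightarrow> linear_map X R (\<lambda>x. inv e (\<psi> x))"
  by (auto simp: linear_map_def transport_smod_def)

lemma normal_epi_factor:
  assumes X: "semimodule X" and R: "semimodule R" and h: "linear_map X Y h"
    and ne: "normal_epi X Y h" and u: "linear_map X R u" and u_Ker: "\<forall>k\<in>Ker X Y h. u k = szero R"
  shows "\<exists>v. linear_map Y R v \<and> (\<forall>x\<in>scar X. v (h x) = u x)"
proof -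
  have surj: "h ` scar X = scar Y" and kn: "k_normal X Y h"
    using ne unfolding normal_epi_def surjective_map_def by auto
  have u_eq: "u x = u x'" if x: "x \<in> scar X" "x' \<in> scar X" "h x = h x'" for x x'
  proof -
    obtain k k' where k: "k \<in> Ker X Y h" "k' \<in> Ker X Y h" and eq: "sadd X x k = sadd X x' k'"
      using kn x unfolding k_normal_def by blast
    have "sadd R (u x) (szero R) = sadd R (u x') (szero R)"
      using arg_cong[OF eq, of u] linear_map_add[OF u] x k u_Ker by (simp add: Ker_def)
    then show "u x = u x'" using smod_add_zero_right[OF R] linear_map_closed[OF u] x by simp
  qed
  define v where "v y = u (SOME x. x \<in> scar X \<and> h x = y)" for y
  have vh: "v (h x) = u x" if x: "x \<in> scar X" for x
    using someI_ex[of "\<lambda>x'. x' \<in> scar X \<and> h x' = h x"] x u_eq unfolding v_def by blast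
  have "linear_map Y R v"
    unfolding linear_map_def
  proof (intro conjI ballI allI)
    fix y assume "y \<in> scar Y"
    then obtain x where "x \<in> scar X" "y = h x" using surj by blast
    then show "v y \<in> scar R" using vh linear_map_closed[OF u] by simp
  next
    fix y y' assume "y \<in> scar Y" "y' \<in> scar Y"
    then obtain x x' where "x \<in> scar X" "y = h x" "x' \<in> scar X" "y' = h x'" using surj by blast
    then show "v (sadd Y y y') = sadd R (v y) (v y')"
      using vh linear_map_add[OF h, symmetric] linear_map_add[OF u] smod_add_closed[OF X] by simp
  next
    show "v (szero Y) = szero R"
      using vh[OF smod_zero_closed[OF X]] linear_map_zero[OF h] linear_map_zero[OF u] by simp
  next
    fix r y assume "y \<in> scar Y"
    then obtain x where "x \<in> scar X" "y = h x" using surj by blast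
    then show "v (ssmul Y r y) = ssmul R r (v y)"
      using vh linear_map_smul[OF h, symmetric] linear_map_smul[OF u] smod_smul_closed[OF X] by simp
  qed
  then show ?thesis using vh by blast
qed

lemma is_pushout_wrt_swap:
  assumes "is_pushout_wrt T L M N f g P g' f'"
  shows "is_pushout_wrt T L N M g f P f' g'"
proof -
  have flip: "(\<forall>x\<in>scar L. a (f x) = b (g x)) \<longleftrightarrow> (\<forall>x\<in>scar L. b (g x) = a (f x))" for a b
    by auto
  show ?thesis
    using assms unfolding is_pushout_wrt_def flip by blast
qed

locale smod_pushout =
  fixes T :: "'q itself"
    and L :: "('s::semiring_1, 'l) smod" and M :: "('s, 'm) smod"
    and N :: "('s, 'n) smod" and P :: "('s, 'p) smod"
    and f :: "'l \<Rightarrow> 'm" and g :: "'l \<Rightarrow> 'n"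
    and g' :: "'m \<Rightarrow> 'p" and f' :: "'n \<Rightarrow> 'p"
  assumes po: "is_pushout_wrt T L M N f g P g' f'"
begin

lemma g'_linear: "linear_map M P g'"
  and f'_linear: "linear_map N P f'"
  and pushout_commute: "x \<in> scar L \<Longrightarrow> g' (f x) = f' (g x)"
  using po unfolding is_pushout_wrt_def by blast+

lemma universal_exists:
  assumes "semimodule (Q :: ('s, 'q) smod)" "linear_map M Q gs" "linear_map N Q fs"
    "\<forall>x\<in>scar L. gs (f x) = fs (g x)"
  shows "\<exists>\<phi>. linear_map P Q \<phi> \<and> (\<forall>x\<in>scar M. \<phi> (g' x) = gs x) \<and> (\<forall>y\<in>scar N. \<phi> (f' y) = fs y)"
  using po assms unfolding is_pushout_wrt_def by blast

lemma universal_unique: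
  assumes "semimodule (Q :: ('s, 'q) smod)" "linear_map M Q gs" "linear_map N Q fs"
    "\<forall>x\<in>scar L. gs (f x) = fs (g x)"
    "linear_map P Q \<phi>" "\<forall>x\<in>scar M. \<phi> (g' x) = gs x" "\<forall>y\<in>scar N. \<phi> (f' y) = fs y"
    "linear_map P Q \<psi>" "\<forall>x\<in>scar M. \<psi> (g' x) = gs x" "\<forall>y\<in>scar N. \<psi> (f' y) = fs y"
    "z \<in> scar P"
  shows "\<phi> z = \<psi> z"
  using po assms unfolding is_pushout_wrt_def by blast

lemma lift_exists:
  fixes e :: "'b \<Rightarrow> 'q" and Q :: "('s, 'b, 'c) smod_scheme"
  assumes e: "inj e" and Q: "semimodule Q" and gs: "linear_map M Q gs" and fs: "linear_map N Q fs"
    and com: "\<forall>x\<in>scar L. gs (f x) = fs (g x)"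
  shows "\<exists>\<phi>. linear_map P Q \<phi> \<and> (\<forall>x\<in>scar M. \<phi> (g' x) = gs x) \<and> (\<forall>y\<in>scar N. \<phi> (f' y) = fs y)"
proof -
  obtain \<psi> where \<psi>: "linear_map P (transport_smod e Q) \<psi>"
    "\<forall>x\<in>scar M. \<psi> (g' x) = e (gs x)" "\<forall>y\<in>scar N. \<psi> (f' y) = e (fs y)"
    using universal_exists[OF semimodule_transport_smod[OF e Q]
        linear_map_comp[OF gs transport_smod_linear[OF e]]
        linear_map_comp[OF fs transport_smod_linear[OF e]]] com
    by auto
  then show ?thesis
    using linear_map_from_transport_smod[OF e \<psi>(1)] inv_f_f[OF e] by auto
qed

lemma lift_unique:
  fixes e :: "'b \<Rightarrow> 'q" and Q :: "('s, 'b, 'c) smod_scheme"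
  assumes e: "inj e" and Q: "semimodule Q" and gs: "linear_map M Q gs" and fs: "linear_map N Q fs"
    and com: "\<forall>x\<in>scar L. gs (f x) = fs (g x)"
    and \<phi>: "linear_map P Q \<phi>" "\<forall>x\<in>scar M. \<phi> (g' x) = gs x" "\<forall>y\<in>scar N. \<phi> (f' y) = fs y"
    and \<psi>: "linear_map P Q \<psi>" "\<forall>x\<in>scar M. \<psi> (g' x) = gs x" "\<forall>y\<in>scar N. \<psi> (f' y) = fs y"
    and z: "z \<in> scar P"
  shows "\<phi> z = \<psi> z"
proof -
  note eQ = transport_smod_linear[OF e, of Q]
  have "e (\<phi> z) = e (\<psi> z)"
    by (rule universal_unique[OF semimodule_transport_smod[OF e Q]
          linear_map_comp[OF gs eQ] linear_map_comp[OF fs eQ] _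
          linear_map_comp[OF \<phi>(1) eQ] _ _ linear_map_comp[OF \<psi>(1) eQ] _ _ z])
      (use com \<phi> \<psi> in auto)
  then show ?thesis using e by (simp add: inj_eq)
qed

end

locale semimodule_pushout = smod_pushout T L M N P f g g' f'
  for T :: "'q itself"
    and L :: "('s::semiring_1, 'l) smod" and M :: "('s, 'm) smod"
    and N :: "('s, 'n) smod" and P :: "('s, 'p) smod"
    and f :: "'l \<Rightarrow> 'm" and g :: "'l \<Rightarrow> 'n"
    and g' :: "'m \<Rightarrow> 'p" and f' :: "'n \<Rightarrow> 'p" +
  assumes L: "semimodule L" and M: "semimodule M" and N: "semimodule N" and P: "semimodule P"
    and f: "linear_map L M f" and g: "linear_map L N g"
begin

lemma generated_by_legs:
  fixes e :: "'p \<Rightarrow> 'q"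
  assumes e: "inj e" and S: "subsemimodule P S"
    and g'S: "g' ` scar M \<subseteq> S" and f'S: "f' ` scar N \<subseteq> S"
  shows "scar P \<subseteq> S"
proof
  fix z assume z: "z \<in> scar P"
  have SP: "S \<subseteq> scar P" using S by (simp add: subsemimodule_def)
  obtain \<phi> where \<phi>: "linear_map P (P\<lparr>scar := S\<rparr>) \<phi>"
    "\<forall>x\<in>scar M. \<phi> (g' x) = g' x" "\<forall>y\<in>scar N. \<phi> (f' y) = f' y"
    using lift_exists[OF e semimodule_restrict[OF P S]
        linear_map_restrict_codomain[OF g'_linear g'S]
        linear_map_restrict_codomain[OF f'_linear f'S]] pushout_commute
    by auto
  have id: "linear_map P P (\<lambda>z. z)" by (simp add: linear_map_def)
  have "\<phi> z = z"
    by (rule lift_unique[OF e P g'_linear f'_linear _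
          linear_map_widen_codomain[OF \<phi>(1) SP] \<phi>(2,3) id _ _ z])
      (simp_all add: pushout_commute)
  then show "z \<in> S" using linear_map_closed[OF \<phi>(1) z] by simp
qed

lemma subsemimodule_leg_sums:
  "subsemimodule P {sadd P (g' m) (f' n) | m n. m \<in> scar M \<and> n \<in> scar N}"
  (is "subsemimodule P ?S")
  unfolding subsemimodule_def
proof (intro conjI ballI allI)
  note g'c = linear_map_closed[OF g'_linear] and f'c = linear_map_closed[OF f'_linear]
  show "?S \<subseteq> scar P" using g'c f'c smod_add_closed[OF P] by auto
  have "szero P = sadd P (g' (szero M)) (f' (szero N))"
    using linear_map_zero[OF g'_linear] linear_map_zero[OF f'_linear]
      smod_add_zero_left[OF P smod_zero_closed[OF P]]
    by simp
  then show "szero P \<in> ?S" using smod_zero_closed[OF M] smod_zero_closed[OF N] by blast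
next
  fix a b assume "a \<in> ?S" "b \<in> ?S"
  then obtain m n m' n' where mn: "m \<in> scar M" "n \<in> scar N" "m' \<in> scar M" "n' \<in> scar N"
    and "a = sadd P (g' m) (f' n)" "b = sadd P (g' m') (f' n')"
    by blast
  then have "sadd P a b = sadd P (g' (sadd M m m')) (f' (sadd N n n'))"
    using linear_map_closed[OF g'_linear] linear_map_closed[OF f'_linear]
    by (simp add: smod_add_swap[OF P] linear_map_add[OF g'_linear] linear_map_add[OF f'_linear])
  then show "sadd P a b \<in> ?S" using mn smod_add_closed[OF M] smod_add_closed[OF N] by blast
next
  fix r a assume "a \<in> ?S"
  then obtain m n where mn: "m \<in> scar M" "n \<in> scar N" and "a = sadd P (g' m) (f' n)"
    by blast
  then have "ssmul P r a = sadd P (g' (ssmul M r m)) (f' (ssmul N r n))"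
    using linear_map_closed[OF g'_linear] linear_map_closed[OF f'_linear]
    by (simp add: smod_smul_add[OF P] linear_map_smul[OF g'_linear] linear_map_smul[OF f'_linear])
  then show "ssmul P r a \<in> ?S" using mn smod_smul_closed[OF M] smod_smul_closed[OF N] by blast
qed

lemma carrier_decomposition:
  fixes e :: "'p \<Rightarrow> 'q"
  assumes e: "inj e" and z: "z \<in> scar P"
  shows "\<exists>m\<in>scar M. \<exists>n\<in>scar N. z = sadd P (g' m) (f' n)"
proof -
  define S where "S = {sadd P (g' m) (f' n) | m n. m \<in> scar M \<and> n \<in> scar N}"
  have "g' m \<in> S" if m: "m \<in> scar M" for m
  proof -
    have "g' m = sadd P (g' m) (f' (szero N))"
      using linear_map_closed[OF g'_linear m] linear_map_zero[OF f'_linear]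
        smod_add_zero_right[OF P] by simp
    then show ?thesis unfolding S_def using m smod_zero_closed[OF N] by blast
  qed
  moreover have "f' n \<in> S" if n: "n \<in> scar N" for n
  proof -
    have "f' n = sadd P (g' (szero M)) (f' n)"
      using linear_map_closed[OF f'_linear n] linear_map_zero[OF g'_linear]
        smod_add_zero_left[OF P] by simp
    then show ?thesis unfolding S_def using n smod_zero_closed[OF M] by blast
  qed
  ultimately have "scar P \<subseteq> S"
    using generated_by_legs[OF e subsemimodule_leg_sums[folded S_def]] by blast
  then show ?thesis using z unfolding S_def by blast
qed

lemma leg_sum_in_image:
  assumes l: "l \<in> scar L" and n: "n \<in> scar N"
  shows "sadd P (g' (f l)) (f' n) \<in> f' ` scar N"
proof -
  have gl: "g l \<in> scar N" using linear_map_closed[OF g l] .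
  have "sadd P (g' (f l)) (f' n) = f' (sadd N (g l) n)"
    using pushout_commute[OF l] linear_map_add[OF f'_linear gl n] by simp
  then show ?thesis using smod_add_closed[OF N gl n] by blast
qed

lemma surjective_f':
  fixes e :: "'p \<Rightarrow> 'q"
  assumes e: "inj e" and surj: "surjective_map L M f"
  shows "surjective_map N P f'"
  unfolding surjective_map_def
proof
  show "f' ` scar N \<subseteq> scar P" using linear_map_closed[OF f'_linear] by blast
  show "scar P \<subseteq> f' ` scar N"
  proof
    fix z assume "z \<in> scar P"
    then obtain m n where m: "m \<in> scar M" and "n \<in> scar N" "z = sadd P (g' m) (f' n)"
      using carrier_decomposition[OF e] by blast
    moreover obtain l where "l \<in> scar L" "m = f l"
      using surj m unfolding surjective_map_def by blast
    ultimately show "z \<in> f' ` scar N" using leg_sum_in_image by blast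
  qed
qed

lemma sub_closure_image_component:
  fixes eP :: "'p \<Rightarrow> 'q" and eM :: "'m set \<Rightarrow> 'q"
  assumes eP: "inj eP" and eM: "inj eM" and y: "y \<in> sub_closure P (f' ` scar N)"
    and m: "m \<in> scar M" and n: "n \<in> scar N" and y_mn: "y = sadd P (g' m) (f' n)"
  shows "m \<in> sub_closure M (f ` scar L)"
proof -
  define K where "K = f ` scar L"
  have K: "subsemimodule M K"
    unfolding K_def by (rule subsemimodule_image[OF subsemimodule_carrier[OF L] f])
  define R where "R = bourne_quotient M K"
  have R: "semimodule R" unfolding R_def by (rule semimodule_bourne_quotient[OF M K])
  have \<pi>: "linear_map M R (bourne_class M K)" unfolding R_def by (rule bourne_class_linear[OF M K])
  have \<pi>_f: "\<forall>x\<in>scar L. bourne_class M K (f x) = szero R"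
    unfolding R_def K_def using bourne_class_subsemimodule[OF M K] K_def by blast
  obtain \<phi> where \<phi>: "linear_map P R \<phi>" and \<phi>_g': "\<forall>x\<in>scar M. \<phi> (g' x) = bourne_class M K x"
    and \<phi>_f': "\<forall>y\<in>scar N. \<phi> (f' y) = szero R"
    using lift_exists[OF eM R \<pi> linear_map_const_zero[OF R]] \<pi>_f by blast
  obtain n1 n2 where yP: "y \<in> scar P" and n12: "n1 \<in> scar N" "n2 \<in> scar N"
    and y_n1: "sadd P y (f' n1) = f' n2"
    using y unfolding sub_closure_def by blast
  note f'c = linear_map_closed[OF f'_linear]
  have "\<phi> y = bourne_class M K m"
    using y_mn linear_map_add[OF \<phi> linear_map_closed[OF g'_linear m] f'c[OF n]] \<phi>_g' \<phi>_f' m n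
      smod_add_zero_right[OF R linear_map_closed[OF \<pi> m]] by simp
  moreover have "\<phi> y = szero R"
    using arg_cong[OF y_n1, of \<phi>] linear_map_add[OF \<phi> yP f'c[OF n12(1)]] \<phi>_f' n12
      smod_add_zero_right[OF R linear_map_closed[OF \<phi> yP]] by simp
  ultimately have "bourne_rel M K m (szero M)"
    using bourne_class_eq_iff[OF M K m] by (simp add: R_def bourne_quotient_def eq_commute)
  then show ?thesis unfolding K_def by (rule bourne_rel_zero_imp_sub_closure[OF M K[unfolded K_def]])
qed

lemma i_normal_f':
  fixes eP :: "'p \<Rightarrow> 'q" and eM :: "'m set \<Rightarrow> 'q"
  assumes eP: "inj eP" and eM: "inj eM" and inormal: "i_normal L M f"
  shows "i_normal N P f'"
proof -
  have "y \<in> f' ` scar N" if y: "y \<in> sub_closure P (f' ` scar N)" for y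
  proof -
    obtain m n where m: "m \<in> scar M" and n: "n \<in> scar N" and y_mn: "y = sadd P (g' m) (f' n)"
      using y carrier_decomposition[OF eP] unfolding sub_closure_def by blast
    then have "m \<in> f ` scar L"
      using sub_closure_image_component[OF eP eM y] inormal unfolding i_normal_def by blast
    then show ?thesis using y_mn leg_sum_in_image n by blast
  qed
  moreover have "f' ` scar N \<subseteq> sub_closure P (f' ` scar N)"
    using sub_closure_superset[OF P] linear_map_closed[OF f'_linear] smod_zero_closed[OF N]
      linear_map_zero[OF f'_linear]
    by (metis image_eqI image_subsetI)
  ultimately show ?thesis unfolding i_normal_def by blast
qed

lemma f'_eq_imp_bourne_rel:
  fixes e :: "'n set \<Rightarrow> 'q"
  assumes e: "inj e" and ne: "normal_epi L M f"
    and n12: "n1 \<in> scar N" "n2 \<in> scar N" and eq: "f' n1 = f' n2"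
  shows "bourne_rel N (g ` Ker L M f) n1 n2"
proof -
  define K where "K = g ` Ker L M f"
  have K: "subsemimodule N K"
    unfolding K_def by (rule subsemimodule_image[OF subsemimodule_Ker[OF L M f] g])
  define R where "R = bourne_quotient N K"
  have R: "semimodule R" unfolding R_def by (rule semimodule_bourne_quotient[OF N K])
  have \<pi>: "linear_map N R (bourne_class N K)" unfolding R_def by (rule bourne_class_linear[OF N K])
  have "\<forall>k\<in>Ker L M f. bourne_class N K (g k) = szero R"
    unfolding R_def K_def using bourne_class_subsemimodule[OF N K] K_def by blast
  then obtain v where v: "linear_map M R v" "\<forall>x\<in>scar L. v (f x) = bourne_class N K (g x)"
    using normal_epi_factor[OF L R f ne linear_map_comp[OF g \<pi>]] by blast
  obtain \<phi> where \<phi>_f': "\<forall>y\<in>scar N. \<phi> (f' y) = bourne_class N K y"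
    using lift_exists[OF e R v(1) \<pi> v(2)] by blast
  have "bourne_class N K n1 = \<phi> (f' n1)" using \<phi>_f' n12(1) by simp
  also have "\<dots> = bourne_class N K n2" using \<phi>_f' n12(2) eq by simp
  finally have "bourne_class N K n1 = bourne_class N K n2" .
  then show ?thesis using bourne_class_eq_iff[OF N K n12(1)] unfolding K_def by blast
qed

lemma normal_epi_f':
  fixes eP :: "'p \<Rightarrow> 'q" and eN :: "'n set \<Rightarrow> 'q"
  assumes eP: "inj eP" and eN: "inj eN" and ne: "normal_epi L M f"
  shows "normal_epi N P f'"
proof -
  have gKer: "g k \<in> Ker N P f'" if "k \<in> Ker L M f" for k
  proof -
    have k: "k \<in> scar L" "f k = szero M" using that by (simp_all add: Ker_def)
    have "f' (g k) = g' (f k)" using pushout_commute[OF k(1)] by simp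
    then show ?thesis
      using k linear_map_zero[OF g'_linear] linear_map_closed[OF g] by (simp add: Ker_def)
  qed
  have "k_normal N P f'"
    unfolding k_normal_def
  proof (intro ballI impI)
    fix n1 n2 assume "n1 \<in> scar N" "n2 \<in> scar N" "f' n1 = f' n2"
    then obtain a b where "a \<in> Ker L M f" "b \<in> Ker L M f" "sadd N n1 (g a) = sadd N n2 (g b)"
      using f'_eq_imp_bourne_rel[OF eN ne] unfolding bourne_rel_def by blast
    then show "\<exists>k\<in>Ker N P f'. \<exists>k'\<in>Ker N P f'. sadd N n1 k = sadd N n2 k'"
      using gKer by blast
  qed
  then show ?thesis
    using surjective_f'[OF eP] ne unfolding normal_epi_def by blast
qed

lemma inj_on_f':
  fixes e :: "'m set \<Rightarrow> 'q"
  assumes e: "inj e" and f_inj: "inj_on f (scar L)" and ne: "normal_epi L N g"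
  shows "inj_on f' (scar N)"
proof (rule inj_onI)
  interpret swapped: semimodule_pushout T L N M P g f f' g'
    using is_pushout_wrt_swap[OF po] L M N P f g by unfold_locales
  fix n1 n2 assume n12: "n1 \<in> scar N" "n2 \<in> scar N" and eq: "f' n1 = f' n2"
  obtain l1 l2 where l: "l1 \<in> scar L" "l2 \<in> scar L" "n1 = g l1" "n2 = g l2"
    using n12 ne unfolding normal_epi_def surjective_map_def by blast
  have "g' (f l1) = g' (f l2)" using eq l pushout_commute by simp
  then have "bourne_rel M (f ` Ker L N g) (f l1) (f l2)"
    by (rule swapped.f'_eq_imp_bourne_rel[OF e ne
          linear_map_closed[OF f l(1)] linear_map_closed[OF f l(2)]])
  then obtain k k' where "k \<in> Ker L N g" "k' \<in> Ker L N g"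
    and fkk': "sadd M (f l1) (f k) = sadd M (f l2) (f k')"
    unfolding bourne_rel_def by blast
  then have k: "k \<in> scar L" "k' \<in> scar L" "g k = szero N" "g k' = szero N"
    by (simp_all add: Ker_def)
  have "f (sadd L l1 k) = f (sadd L l2 k')"
    using fkk' l k linear_map_add[OF f] by simp
  then have lk: "sadd L l1 k = sadd L l2 k'"
    using f_inj smod_add_closed[OF L] l k unfolding inj_on_def by blast
  have "sadd N (g l1) (szero N) = sadd N (g l2) (szero N)"
    using arg_cong[OF lk, of g] linear_map_add[OF g] l k by simp
  then show "n1 = n2"
    using smod_add_zero_right[OF N] linear_map_closed[OF g] l by simp
qed

end

theorem mainTheorem3:
  fixes L :: "('s::semiring_1, 'l) smod" and M :: "('s, 'm) smod"
    and N :: "('s, 'n) smod" and P :: "('s, 'p) smod"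
    and f :: "'l \<Rightarrow> 'm" and g :: "'l \<Rightarrow> 'n"
    and g' :: "'m \<Rightarrow> 'p" and f' :: "'n \<Rightarrow> 'p"
  assumes "semimodule L" and "semimodule M" and "semimodule N" and "semimodule P"
    and "linear_map L M f" and "linear_map L N g"
    and po: "is_pushout_wrt TYPE(('l + 'm + 'n + 'p) set) L M N f g P g' f'"
  shows "(surjective_map L M f \<longrightarrow> surjective_map N P f')
       \<and> (i_normal L M f \<longrightarrow> i_normal N P f')
       \<and> (normal_epi L M f \<longrightarrow> normal_epi N P f')
       \<and> (inj_on f (scar L) \<and> normal_epi L N g \<longrightarrow> inj_on f' (scar N))"
proof -
  interpret semimodule_pushout "TYPE(('l + 'm + 'n + 'p) set)" L M N P f g g' f'
    using assms by unfold_locales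
  have eP: "inj (\<lambda>z::'p. {Inr (Inr (Inr z))} :: ('l + 'm + 'n + 'p) set)"
    by (simp add: inj_def)
  have eM: "inj (\<lambda>A::'m set. (\<lambda>m. Inr (Inl m)) ` A :: ('l + 'm + 'n + 'p) set)"
    by (simp add: inj_def inj_image_eq_iff)
  have eN: "inj (\<lambda>A::'n set. (\<lambda>n. Inr (Inr (Inl n))) ` A :: ('l + 'm + 'n + 'p) set)"
    by (simp add: inj_def inj_image_eq_iff)
  show ?thesis
    using surjective_f'[OF eP] i_normal_f'[OF eP eM] normal_epi_f'[OF eP eN] inj_on_f'[OF eM]
    by blast
qed

end
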